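(* Let $\alpha\in\{2,3,\ldots\}$, $n\in\mathbb{N}$ and $r\in\mathbb{Z}$, and set $n_*=\lfloor n/2^{\alpha-2}\rfloor$, $r_*=\lfloor r/2^{\alpha-2}\rfloor$. Then $$2^{-\left\lfloor\frac{n-2^{\alpha-1}}{\varphi(2^{\alpha})}\right\rfloor}\sum_{k\equiv r\ (\mathrm{mod}\ 2^{\alpha})}\binom nk\equiv1\pmod 2$$ if and only if $\binom{\{n\}_{2^{\alpha-2}}}{\{r\}_{2^{\alpha-2}}}$ is odd and one of the following holds: (a) $n_*>2$ and $n_*\not\equiv2r_*+2\pmod 4$; (b) $n_*=2$ and $2\mid r_*$.
   Context: $\varphi$ is Euler's totient function. $\{a\}_m$ denotes the least nonnegative residue of the integer $a$ modulo the positive integer $m$. The sum runs over all integers $k\equiv r\pmod{2^\alpha}$ with $\binom nk=0$ unless $0\le k\le n$; the left side is an integer (possibly multiplied by a nonnegative power of $2$ when the floor is negative). *)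

theory Defs
  imports Complex_Main "HOL-Number_Theory.Number_Theory"
begin

end

theory Submission
  imports Defs "HOL-Computational_Algebra.Polynomial"
begin

text \<open>
  Let \<open>q = 2^(\<alpha>-2)\<close>, \<open>h = 2q\<close> and \<open>n = m h + n'\<close> with \<open>n' < h\<close>, so that the power of 2
  in the statement is \<open>2^(1-m)\<close>. Twice the sum over \<open>k \<equiv> \<rho> (mod 2h)\<close> is the sum (or the
  difference) of the coefficients of \<open>x^(\<rho> mod h)\<close> in the remainders of \<open>(1+x)^n\<close> modulo
  \<open>x^h - 1\<close> and modulo \<open>x^h + 1\<close>. Since \<open>(1+x)^h \<equiv> 1 + x^h + 2 x^q (mod 4)\<close>, for \<open>m \<ge> 2\<close>
  the first coefficient is divisible by \<open>2^(m+1)\<close>, while modulo \<open>2^(m+1)\<close> the second one is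
  that of \<open>2^m x^(qm) (1+x)^n'\<close>, i.e. \<open>2^m\<close> times a single binomial coefficient
  \<open>n' choose j\<close>. So the sum is \<open>2^(m-1)\<close> times an odd number iff \<open>n' choose j\<close> is odd, and
  Lucas' theorem for the prime 2 turns this into the digit conditions. For \<open>m \<le> 1\<close> the
  residue class contains at most one \<open>k \<le> n\<close>.
\<close>

lemma odd_choose_double:
  "odd ((2 * a) choose i) \<longleftrightarrow> even i \<and> odd (a choose (i div 2))"
proof (induction a arbitrary: i)
  case 0
  have "0 choose k = (if k = 0 then 1 else 0)" for k :: nat
    by simp
  then show ?case
    by auto
next
  case (Suc a)
  show ?case
  proof (cases i)
    case (Suc i')
    show ?thesis
    proof (cases i')
      case (Suc k)
      have "2 * Suc a choose i = (2 * a choose k) + 2 * (2 * a choose Suc k) + (2 * a choose Suc (Suc k))"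
        using \<open>i = Suc i'\<close> Suc by (simp add: binomial_Suc_Suc)
      moreover have "Suc a choose Suc (k div 2) = (a choose (k div 2)) + (a choose Suc (k div 2))"
        by simp
      ultimately show ?thesis
        using Suc.IH[of k] Suc.IH[of "Suc (Suc k)"] \<open>i = Suc i'\<close> Suc by auto
    qed (use \<open>i = Suc i'\<close> in simp)
  qed simp
qed

lemma odd_choose_pow2_mult:
  "odd ((2 ^ j * a) choose i) \<longleftrightarrow> 2 ^ j dvd i \<and> odd (a choose (i div 2 ^ j))"
proof (induction j arbitrary: i)
  case (Suc j)
  show ?case
  proof (cases "even i")
    case True
    then obtain t where "i = 2 * t" by blast
    then show ?thesis
      using odd_choose_double[of "2 ^ j * a" i] Suc.IH[of t]
      by (simp add: mult.assoc div_mult2_eq)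
  next
    case False
    then show ?thesis
      using odd_choose_double[of "2 ^ j * a" i]
      by (auto simp: mult.assoc dest: dvd_trans[of 2 "2 ^ Suc j" i, rotated])
  qed
qed simp

lemma odd_choose_pow2_digits:
  assumes "b < 2 ^ j" and "d < 2 ^ j"
  shows "odd ((2 ^ j * a + b) choose (2 ^ j * c + d)) \<longleftrightarrow> odd (a choose c) \<and> odd (b choose d)"
proof -
  define q :: nat where "q = 2 ^ j"
  define k where "k = q * c + d"
  define f where "f i = ((q * a) choose i) * (b choose (k - i))" for i
  have even_f: "even (f i)" if "i \<le> k" and "i \<noteq> q * c" for i
  proof (cases "q dvd i")
    case True
    then obtain t where t: "i = q * t" by blast
    have "t < c"
    proof (rule ccontr)
      assume "\<not> t < c"
      with \<open>i \<noteq> q * c\<close> t have "c + 1 \<le> t" by auto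
      then have "q * (c + 1) \<le> i" unfolding t by (rule mult_le_mono2)
      with \<open>i \<le> k\<close> \<open>d < 2 ^ j\<close> show False by (simp add: k_def q_def)
    qed
    then have "q * (t + 1) \<le> q * c" by (intro mult_le_mono2) simp
    then have "b < k - i" using \<open>b < 2 ^ j\<close> t by (simp add: k_def q_def)
    then show ?thesis by (simp add: f_def binomial_eq_0)
  next
    case False
    then show ?thesis using odd_choose_pow2_mult[of j a i] by (simp add: f_def q_def)
  qed
  have "(q * a + b) choose k = (\<Sum>i\<le>k. f i)"
    by (simp add: f_def vandermonde)
  also have "\<dots> = f (q * c) + (\<Sum>i\<in>{..k} - {q * c}. f i)"
    by (simp add: sum.remove k_def)
  finally have "(q * a + b) choose k = f (q * c) + (\<Sum>i\<in>{..k} - {q * c}. f i)" .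
  moreover have "even (\<Sum>i\<in>{..k} - {q * c}. f i)"
    using even_f by (intro dvd_sum) auto
  ultimately have "odd ((q * a + b) choose k) \<longleftrightarrow> odd (f (q * c))"
    by simp
  then show ?thesis
    using odd_choose_pow2_mult[of j a "q * c"] by (simp add: f_def k_def q_def)
qed

lemma odd_choose_le_one:
  fixes a c :: nat
  assumes "a \<le> 1" and "c \<le> 1"
  shows "odd (a choose c) \<longleftrightarrow> c \<le> a"
  using assms by (cases a; cases c) auto

text \<open>For \<open>r < h\<close>, the coefficient of \<open>x^r\<close> in the remainder of \<open>A\<close> modulo \<open>x^h - c\<close>.\<close>

definition reduced_coeff :: "'a::comm_ring_1 \<Rightarrow> nat \<Rightarrow> 'a poly \<Rightarrow> nat \<Rightarrow> 'a" where
  "reduced_coeff c h A r = (\<Sum>k\<le>degree A. if k mod h = r then c ^ (k div h) * coeff A k else 0)"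

lemma reduced_coeff_eq_sum:
  assumes "degree A < N"
  shows "reduced_coeff c h A r = (\<Sum>k<N. if k mod h = r then c ^ (k div h) * coeff A k else 0)"
  unfolding reduced_coeff_def
  using assms by (intro sum.mono_neutral_left) (auto simp: coeff_eq_0)

lemma reduced_coeff_add: "reduced_coeff c h (A + B) r = reduced_coeff c h A r + reduced_coeff c h B r"
proof -
  define N where "N = Suc (max (degree A) (degree B))"
  have "degree (A + B) < N" and "degree A < N" and "degree B < N"
    using degree_add_le_max[of A B] by (auto simp: N_def)
  then show ?thesis
    by (simp add: reduced_coeff_eq_sum sum.distrib[symmetric] algebra_simps if_distrib cong: if_cong)
qed

lemma reduced_coeff_smult: "reduced_coeff c h (smult e A) r = e * reduced_coeff c h A r"
proof -
  have "degree (smult e A) < Suc (degree A)"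
    using degree_smult_le[of e A] by auto
  then have "reduced_coeff c h (smult e A) r =
      (\<Sum>k\<le>degree A. if k mod h = r then c ^ (k div h) * coeff (smult e A) k else 0)"
    by (simp only: reduced_coeff_eq_sum lessThan_Suc_atMost)
  then show ?thesis
    by (simp add: reduced_coeff_def sum_distrib_left if_distrib algebra_simps cong: if_cong)
qed

lemma reduced_coeff_monom_mult:
  "reduced_coeff c h (monom 1 s * R) r =
     (\<Sum>i\<le>degree R. if (i + s) mod h = r then c ^ ((i + s) div h) * coeff R i else 0)"
proof -
  let ?g = "\<lambda>k. if k mod h = r then c ^ (k div h) * coeff (monom 1 s * R) k else 0"
  define N where "N = Suc (degree R) + s"
  have "degree (monom 1 s * R) < N"
    using degree_mult_le[of "monom 1 s" R] by (simp add: N_def degree_monom_eq)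
  then have "reduced_coeff c h (monom 1 s * R) r = sum ?g {..<N}"
    by (rule reduced_coeff_eq_sum)
  also have "\<dots> = sum ?g {..<s} + sum ?g {s..<N}"
    by (simp add: N_def sum.atLeastLessThan_concat lessThan_atLeast0)
  also have "sum ?g {..<s} = 0"
    by (intro sum.neutral) (auto simp: coeff_monom_mult)
  also have "sum ?g {s..<N} = sum ?g {0 + s..<Suc (degree R) + s}"
    by (simp only: N_def add_0)
  also have "\<dots> = (\<Sum>i<Suc (degree R). ?g (i + s))"
    by (simp only: sum.shift_bounds_nat_ivl lessThan_atLeast0)
  also have "\<dots> = (\<Sum>i\<le>degree R. if (i + s) mod h = r then c ^ ((i + s) div h) * coeff R i else 0)"
    unfolding lessThan_Suc_atMost by (intro sum.cong refl) (simp add: coeff_monom_mult)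
  finally show ?thesis
    by simp
qed

lemma reduced_coeff_monom_mult_self:
  assumes "h > 0"
  shows "reduced_coeff c h (monom 1 h * R) r = c * reduced_coeff c h R r"
  unfolding reduced_coeff_monom_mult
  using assms by (auto simp: reduced_coeff_def sum_distrib_left intro!: sum.cong)

lemma reduced_coeff_binomial_mult_add_smult:
  assumes "h > 0"
  shows "reduced_coeff c h ((monom 1 h - [:c:]) * U + smult e W) r = e * reduced_coeff c h W r"
proof -
  have "(monom 1 h - [:c:]) * U + smult e W = monom 1 h * U + smult (- c) U + smult e W"
    by (simp add: algebra_simps)
  then show ?thesis
    using assms by (simp only: reduced_coeff_add reduced_coeff_smult reduced_coeff_monom_mult_self)
      (simp add: algebra_simps)
qed

lemma reduced_coeff_monom_mult_single:
  assumes "degree R < h" and "j < h" and "(j + s) mod h = r"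
  shows "reduced_coeff c h (monom 1 s * R) r = c ^ ((j + s) div h) * coeff R j"
proof -
  have "(i + s) mod h = r \<longleftrightarrow> i = j" if "i \<le> degree R" for i
  proof
    assume "(i + s) mod h = r"
    then have "[i + s = j + s] (mod h)"
      using assms(3) by (simp add: cong_def)
    then have "[i = j] (mod h)"
      by (rule cong_add_rcancel_nat[THEN iffD1])
    then show "i = j"
      using that assms(1,2) by (simp add: cong_def)
  qed (use assms(3) in simp)
  then have "reduced_coeff c h (monom 1 s * R) r =
      (\<Sum>i\<le>degree R. if i = j then c ^ ((j + s) div h) * coeff R j else 0)"
    unfolding reduced_coeff_monom_mult by (intro sum.cong) auto
  then show ?thesis
    by (auto simp: coeff_eq_0)
qed

lemma reduced_coeff_minus_one_cong:
  fixes A :: "int poly"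
  shows "[reduced_coeff (-1) h A r = reduced_coeff 1 h A r] (mod 2)"
proof -
  have "even ((-1::int) ^ k - 1)" for k
    by (cases "even k") auto
  then have "even (reduced_coeff (-1) h A r - reduced_coeff 1 h A r)"
    unfolding reduced_coeff_def sum_subtractf[symmetric]
    by (intro dvd_sum) (auto simp: left_diff_distrib[symmetric])
  then show ?thesis
    by (simp add: cong_iff_dvd_diff)
qed

lemma coeff_sum_mod_double_multisection:
  fixes A :: "'a::comm_ring_1 poly"
  assumes "\<rho> < 2 * h"
  shows "2 * (\<Sum>k\<le>degree A. if k mod (2 * h) = \<rho> then coeff A k else 0) =
    reduced_coeff 1 h A (\<rho> mod h) + (-1) ^ (\<rho> div h) * reduced_coeff (-1) h A (\<rho> mod h)"
proof -
  have indicator: "2 * (if k mod (2 * h) = \<rho> then 1 else 0) =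
      (if k mod h = \<rho> mod h then 1 + (-1) ^ (\<rho> div h) * (-1) ^ (k div h) else (0::'a))" for k
  proof -
    have parity: "b mod 2 = a \<longleftrightarrow> even (a + b)" if "a < 2" for a b :: nat
      using that by presburger
    have "h > 0"
      using assms by simp
    have k: "k mod (2 * h) = h * (k div h mod 2) + k mod h"
      by (simp add: mod_mult2_eq mult.commute)
    have \<rho>: "\<rho> = h * (\<rho> div h) + \<rho> mod h" and "\<rho> div h < 2"
      using assms by (simp_all add: less_mult_imp_div_less mult.commute)
    have "k mod (2 * h) = \<rho> \<longleftrightarrow> k mod h = \<rho> mod h \<and> k div h mod 2 = \<rho> div h"
    proof
      assume "k mod (2 * h) = \<rho>"
      then show "k mod h = \<rho> mod h \<and> k div h mod 2 = \<rho> div h"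
        using k \<open>h > 0\<close> by auto
    qed (use k \<rho> in simp)
    moreover have "k div h mod 2 = \<rho> div h \<longleftrightarrow> even (\<rho> div h + k div h)"
      using \<open>\<rho> div h < 2\<close> by (rule parity)
    ultimately show ?thesis
      by (simp add: power_add[symmetric] minus_one_power_iff)
  qed
  have "2 * (\<Sum>k\<le>degree A. if k mod (2 * h) = \<rho> then coeff A k else 0) =
      (\<Sum>k\<le>degree A. 2 * (if k mod (2 * h) = \<rho> then 1 else 0) * coeff A k)"
    unfolding sum_distrib_left by (intro sum.cong) auto
  also have "\<dots> = (\<Sum>k\<le>degree A.
      (if k mod h = \<rho> mod h then 1 + (-1) ^ (\<rho> div h) * (-1) ^ (k div h) else 0) * coeff A k)"
    by (simp only: indicator)
  also have "\<dots> = reduced_coeff 1 h A (\<rho> mod h) + (-1) ^ (\<rho> div h) * reduced_coeff (-1) h A (\<rho> mod h)"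
    unfolding reduced_coeff_def sum_distrib_left sum.distrib[symmetric]
    by (intro sum.cong) (auto simp: algebra_simps)
  finally show ?thesis .
qed

lemma dvd_power_add_diff_power:
  fixes x y :: "'a::comm_ring_1"
  shows "y dvd (x + y) ^ m - x ^ m"
  using power_diff_sumr2[of "x + y" m x] by simp

lemma one_plus_power_two_power:
  fixes x :: "'a::comm_ring_1"
  shows "\<exists>G. (1 + x) ^ 2 ^ Suc b = 1 + x ^ 2 ^ Suc b + 2 * x ^ 2 ^ b + 4 * G"
proof (induction b)
  case 0
  show ?case
    by (rule exI[of _ 0]) (simp add: power2_eq_square algebra_simps)
next
  case (Suc b)
  then obtain G where G: "(1 + x) ^ 2 ^ Suc b = 1 + x ^ 2 ^ Suc b + 2 * x ^ 2 ^ b + 4 * G" ..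
  define y where "y = x ^ 2 ^ b"
  have y2: "y ^ 2 = x ^ 2 ^ Suc b" and y4: "y ^ 4 = x ^ 2 ^ Suc (Suc b)"
    by (simp_all add: y_def power_mult[symmetric] mult.commute)
  have "(1 + x) ^ 2 ^ Suc (Suc b) = ((1 + x) ^ 2 ^ Suc b) ^ 2"
    by (simp add: power_mult[symmetric] mult.commute)
  also have "\<dots> = 1 + y ^ 4 + 2 * y ^ 2 + 4 * (y + y ^ 2 + y ^ 3 + 2 * G * (1 + y) ^ 2 + 4 * G ^ 2)"
    unfolding G y2[symmetric] y_def[symmetric]
    by (simp add: power2_eq_square power3_eq_cube power4_eq_xxxx algebra_simps)
  finally show ?case
    unfolding y2 y4 by blast
qed

lemma one_plus_power_mod_minus_one:
  fixes x :: "'a::comm_ring_1"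
  assumes "m \<ge> 2"
  shows "\<exists>U W. (1 + x) ^ (2 ^ Suc b * m) = (x ^ 2 ^ Suc b - 1) * U + 2 ^ Suc m * W"
proof -
  obtain G where G: "(1 + x) ^ 2 ^ Suc b = 1 + x ^ 2 ^ Suc b + 2 * x ^ 2 ^ b + 4 * G"
    using one_plus_power_two_power by blast
  define Z where "Z = x ^ 2 ^ Suc b - 1"
  define y where "y = x ^ 2 ^ b"
  define C where "C = 1 + y + 2 * G"
  define C' where "C' = 1 + y + 2 * (G * (1 + y) + G ^ 2)"
  have y2: "y ^ 2 = x ^ 2 ^ Suc b"
    by (simp add: y_def power_mult[symmetric] mult.commute)
  have base: "(1 + x) ^ 2 ^ Suc b = Z + 2 * C"
    unfolding G Z_def C_def y_def by (simp add: algebra_simps)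
  have C2: "C ^ 2 = Z + 2 * C'"
    unfolding C_def C'_def Z_def y2[symmetric] by (simp add: power2_eq_square algebra_simps)
  obtain U where U: "(2 * C + Z) ^ m - (2 * C) ^ m = Z * U"
    using dvd_power_add_diff_power by blast
  have Cm: "C ^ m = C ^ 2 * C ^ (m - 2)"
    using assms by (metis le_add_diff_inverse power_add)
  have "(1 + x) ^ (2 ^ Suc b * m) = Z * U + 2 ^ m * C ^ m"
    unfolding power_mult base using U by (simp add: diff_eq_eq power_mult_distrib add.commute)
  also have "\<dots> = Z * (U + 2 ^ m * C ^ (m - 2)) + 2 ^ Suc m * (C' * C ^ (m - 2))"
    unfolding Cm C2 by (simp add: algebra_simps)
  finally show ?thesis
    unfolding Z_def by blast
qed

lemma one_plus_power_mod_plus_one: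
  fixes x :: "'a::comm_ring_1"
  shows "\<exists>U H. (1 + x) ^ (2 ^ Suc b * m) = (x ^ 2 ^ Suc b + 1) * U + 2 ^ m * (x ^ (2 ^ b * m) + 2 * H)"
proof -
  obtain G where G: "(1 + x) ^ 2 ^ Suc b = 1 + x ^ 2 ^ Suc b + 2 * x ^ 2 ^ b + 4 * G"
    using one_plus_power_two_power by blast
  define Z where "Z = x ^ 2 ^ Suc b + 1"
  define B where "B = x ^ 2 ^ b + 2 * G"
  have base: "(1 + x) ^ 2 ^ Suc b = Z + 2 * B"
    unfolding G Z_def B_def by (simp add: algebra_simps)
  obtain U where U: "(2 * B + Z) ^ m - (2 * B) ^ m = Z * U"
    using dvd_power_add_diff_power by blast
  obtain V where V: "(x ^ 2 ^ b + 2 * G) ^ m - (x ^ 2 ^ b) ^ m = 2 * G * V"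
    using dvd_power_add_diff_power by blast
  have "(1 + x) ^ (2 ^ Suc b * m) = Z * U + 2 ^ m * B ^ m"
    unfolding power_mult base using U by (simp add: diff_eq_eq power_mult_distrib add.commute)
  also have "B ^ m = x ^ (2 ^ b * m) + 2 * (G * V)"
    using V unfolding B_def by (simp add: diff_eq_eq power_mult[symmetric] algebra_simps)
  finally show ?thesis
    unfolding Z_def by blast
qed

lemma coeff_one_plus_X_power: "coeff ([:1, 1:] ^ n) k = (of_nat (n choose k) :: 'a::comm_semiring_1)"
  by (cases "k \<le> n") (simp_all add: coeff_linear_poly_power coeff_eq_0 degree_linear_power binomial_eq_0)

lemma one_plus_X: "1 + monom 1 1 = [:1, 1:]"
  by (simp add: monom_Suc one_pCons)

lemma numeral_power_mult_poly: "numeral a ^ k * p = smult (numeral a ^ k) p"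
  by (simp add: numeral_poly poly_const_pow)

lemma reduced_coeff_one_one_plus_X_power_dvd:
  assumes "m \<ge> 2"
  shows "(2::'a::comm_ring_1) ^ Suc m dvd reduced_coeff 1 (2 ^ Suc b) ([:1, 1:] ^ (2 ^ Suc b * m + n')) r"
proof -
  obtain U W :: "'a poly"
    where UW: "[:1, 1:] ^ (2 ^ Suc b * m) = (monom 1 (2 ^ Suc b) - [:1:]) * U + 2 ^ Suc m * W"
    using one_plus_power_mod_minus_one[OF assms, of "monom 1 1" b]
    unfolding one_plus_X monom_power by (auto simp: one_pCons)
  have "[:1, 1:] ^ (2 ^ Suc b * m + n') =
      (monom 1 (2 ^ Suc b) - [:1:]) * (U * [:1, 1:] ^ n') + smult (2 ^ Suc m) (W * [:1, 1:] ^ n')"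
    unfolding power_add UW numeral_power_mult_poly by (simp add: algebra_simps)
  then have "reduced_coeff 1 (2 ^ Suc b) ([:1, 1:] ^ (2 ^ Suc b * m + n')) r =
      2 ^ Suc m * reduced_coeff 1 (2 ^ Suc b) (W * [:1, 1:] ^ n') r"
    by (simp only: reduced_coeff_binomial_mult_add_smult zero_less_numeral zero_less_power)
  then show ?thesis
    by simp
qed

lemma reduced_coeff_minus_one_one_plus_X_power_cong:
  fixes b m n' j :: nat
  assumes "n' < 2 ^ Suc b" and "j < 2 ^ Suc b" and "(j + 2 ^ b * m) mod 2 ^ Suc b = r"
  shows "[reduced_coeff (-1) (2 ^ Suc b) ([:1, 1:] ^ (2 ^ Suc b * m + n')) r = 2 ^ m * int (n' choose j)]
    (mod 2 ^ Suc m)"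
proof -
  let ?L = "reduced_coeff (-1) (2 ^ Suc b)"
  define R :: "int poly" where "R = [:1, 1:] ^ n'"
  obtain U H :: "int poly"
    where UH: "[:1, 1:] ^ (2 ^ Suc b * m) =
      (monom 1 (2 ^ Suc b) + 1) * U + 2 ^ m * (monom 1 (2 ^ b * m) + 2 * H)"
    using one_plus_power_mod_plus_one[of "monom 1 1" b m]
    unfolding one_plus_X monom_power by auto
  have "[:1, 1:] ^ (2 ^ Suc b * m + n') = (monom 1 (2 ^ Suc b) - [:-1:]) * (U * R)
      + smult (2 ^ m) (monom 1 (2 ^ b * m) * R + smult 2 (H * R))"
    unfolding power_add UH R_def numeral_power_mult_poly
    by (simp add: algebra_simps numeral_poly one_pCons)
  then have L: "?L ([:1, 1:] ^ (2 ^ Suc b * m + n')) r =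
      2 ^ m * (?L (monom 1 (2 ^ b * m) * R) r + 2 * ?L (H * R) r)"
    by (simp only: reduced_coeff_binomial_mult_add_smult zero_less_numeral zero_less_power)
      (simp only: reduced_coeff_add reduced_coeff_smult)
  have "degree R < 2 ^ Suc b"
    using assms(1) by (simp add: R_def degree_linear_power)
  then have "reduced_coeff 1 (2 ^ Suc b) (monom 1 (2 ^ b * m) * R) r = int (n' choose j)"
    using assms(2,3) by (simp add: reduced_coeff_monom_mult_single R_def coeff_one_plus_X_power)
  then have "[?L (monom 1 (2 ^ b * m) * R) r = int (n' choose j)] (mod 2)"
    using reduced_coeff_minus_one_cong by metis
  then have "[2 ^ m * ?L (monom 1 (2 ^ b * m) * R) r = 2 ^ m * int (n' choose j)] (mod 2 ^ Suc m)"
    by (simp add: cong_iff_dvd_diff right_diff_distrib[symmetric])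
  moreover have "[2 ^ m * (?L (monom 1 (2 ^ b * m) * R) r + 2 * ?L (H * R) r) =
      2 ^ m * ?L (monom 1 (2 ^ b * m) * R) r] (mod 2 ^ Suc m)"
    by (simp add: cong_iff_dvd_diff algebra_simps)
  ultimately show ?thesis
    unfolding L by (rule cong_trans[rotated])
qed

definition binomial_residue_sum :: "nat \<Rightarrow> nat \<Rightarrow> nat \<Rightarrow> nat" where
  "binomial_residue_sum n M \<rho> = (\<Sum>k\<in>{k\<in>{0..n}. k mod M = \<rho>}. n choose k)"

lemma of_nat_binomial_residue_sum:
  "of_nat (binomial_residue_sum n M \<rho>) =
    (\<Sum>k\<le>degree ([:1, 1:] ^ n). if k mod M = \<rho> then coeff ([:1, 1:] ^ n) k else (0::'a::comm_ring_1))"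
proof -
  have "of_nat (binomial_residue_sum n M \<rho>) =
      (\<Sum>k\<in>{0..n}. if k mod M = \<rho> then of_nat (n choose k) else (0::'a))"
    unfolding binomial_residue_sum_def of_nat_sum by (rule sum.inter_filter) simp
  also have "\<dots> = (\<Sum>k\<le>degree ([:1, 1:] ^ n). if k mod M = \<rho> then coeff ([:1, 1:] ^ n) k else 0)"
    unfolding atLeast0AtMost degree_linear_power by (simp add: coeff_one_plus_X_power cong: if_cong)
  finally show ?thesis .
qed

lemma binomial_residue_sum_cong:
  fixes b m n n' j \<rho> :: nat
  assumes "m \<ge> 2" and "n = 2 ^ Suc b * m + n'" and "n' < 2 ^ Suc b" and "\<rho> < 2 * 2 ^ Suc b"
    and "j < 2 ^ Suc b" and "(j + 2 ^ b * m) mod 2 ^ Suc b = \<rho> mod 2 ^ Suc b"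
  shows "[2 * int (binomial_residue_sum n (2 * 2 ^ Suc b) \<rho>) = 2 ^ m * int (n' choose j)]
    (mod 2 ^ Suc m)"
proof -
  define h :: nat where "h = 2 ^ Suc b"
  define A :: "int poly" where "A = [:1, 1:] ^ n"
  define \<sigma> :: int where "\<sigma> = (-1) ^ (\<rho> div h)"
  have "\<rho> < 2 * h"
    using assms(4) by (simp add: h_def)
  then have sum_eq: "2 * int (binomial_residue_sum n (2 * h) \<rho>) =
      reduced_coeff 1 h A (\<rho> mod h) + \<sigma> * reduced_coeff (-1) h A (\<rho> mod h)"
    unfolding A_def \<sigma>_def by (subst of_nat_binomial_residue_sum) (rule coeff_sum_mod_double_multisection)
  have plus: "[reduced_coeff 1 h A (\<rho> mod h) = 0] (mod 2 ^ Suc m)"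
    using reduced_coeff_one_one_plus_X_power_dvd[OF assms(1)]
    by (simp add: A_def h_def assms(2) cong_0_iff)
  have minus: "[reduced_coeff (-1) h A (\<rho> mod h) = 2 ^ m * int (n' choose j)] (mod 2 ^ Suc m)"
    unfolding A_def h_def assms(2)
    by (rule reduced_coeff_minus_one_one_plus_X_power_cong) (use assms(3-6) in simp_all)
  have sign: "[\<sigma> * (2 ^ m * int (n' choose j)) = 2 ^ m * int (n' choose j)] (mod 2 ^ Suc m)"
  proof -
    have "odd \<sigma>"
      by (simp add: \<sigma>_def)
    then obtain t where "\<sigma> = 2 * t + 1"
      by (rule oddE)
    then have "\<sigma> * (2 ^ m * int (n' choose j)) - 2 ^ m * int (n' choose j) =
        2 ^ Suc m * (t * int (n' choose j))"
      by (simp add: algebra_simps)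
    then show ?thesis
      by (simp add: cong_iff_dvd_diff)
  qed
  have "[2 * int (binomial_residue_sum n (2 * h) \<rho>) =
      0 + \<sigma> * (2 ^ m * int (n' choose j))] (mod 2 ^ Suc m)"
    unfolding sum_eq using plus minus by (intro cong_add cong_mult cong_refl)
  then show ?thesis
    using sign unfolding h_def by (auto intro: cong_trans)
qed

lemma odd_cofactor_iff_cong:
  fixes x c :: int
  assumes "[x = 2 ^ m * c] (mod 2 ^ Suc m)"
  shows "(\<exists>z. odd z \<and> x = z * 2 ^ m) \<longleftrightarrow> odd c"
proof -
  obtain t where "x - 2 ^ m * c = 2 ^ Suc m * t"
    using assms by (auto simp: cong_iff_dvd_diff elim!: dvdE)
  then have "x = (c + 2 * t) * 2 ^ m"
    by (simp add: algebra_simps)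
  then show ?thesis
    by auto
qed

lemma mult_add_less_mult:
  fixes q x y k :: nat
  assumes "x < k" and "y < q"
  shows "q * x + y < q * k"
proof -
  have "q * (x + 1) \<le> q * k"
    using assms(1) by (intro mult_le_mono2) simp
  with assms(2) show ?thesis
    by simp
qed

lemma mod_double_mult_add:
  fixes q x r :: nat
  assumes "r < q"
  shows "(q * x + r) mod (2 * q) = q * (x mod 2) + r"
proof -
  have "(q * x + r) mod (q * 2) = q * ((q * x + r) div q mod 2) + (q * x + r) mod q"
    by (rule mod_mult2_eq)
  then show ?thesis
    using assms by (simp add: mult.commute)
qed

lemma parity_le_iff_mod_4_ne:
  fixes \<rho> n :: nat
  shows "(\<rho> + n div 2) mod 2 \<le> n mod 2 \<longleftrightarrow> n mod 4 \<noteq> (2 * \<rho> + 2) mod 4"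
proof -
  have bits: "(x + y) mod 2 \<le> z \<longleftrightarrow> 2 * y + z \<noteq> 2 * ((x + 1) mod 2)"
    if "x < 2" and "y < 2" and "z < 2" for x y z :: nat
    using that by (auto simp: less_2_cases_iff)
  have "n mod 4 = 2 * (n div 2 mod 2) + n mod 2"
    using mod_mult2_eq[of n 2 2] by simp
  moreover have "(2 * \<rho> + 2) mod 4 = 2 * ((\<rho> mod 2 + 1) mod 2)"
    using mod_mult_mult1[of 2 "\<rho> + 1" 2] by (simp add: mod_Suc_eq)
  moreover have "(\<rho> + n div 2) mod 2 = (\<rho> mod 2 + n div 2 mod 2) mod 2"
    by (simp add: mod_add_eq)
  ultimately show ?thesis
    using bits[of "\<rho> mod 2" "n div 2 mod 2" "n mod 2"] by simp
qed

lemma odd_part_binomial_residue_sum_ge_4: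
  fixes b ns n0 \<rho>1 r0 :: nat
  assumes "n = 2 ^ b * ns + n0" and "\<rho> = 2 ^ b * \<rho>1 + r0"
    and "ns \<ge> 4" and "n0 < 2 ^ b" and "r0 < 2 ^ b" and "\<rho>1 < 4"
  shows "(\<exists>z. odd z \<and> 2 * int (binomial_residue_sum n (4 * 2 ^ b) \<rho>) = z * 2 ^ (ns div 2))
    \<longleftrightarrow> odd (n0 choose r0) \<and> ns mod 4 \<noteq> (2 * \<rho>1 + 2) mod 4"
proof -
  define q :: nat where "q = 2 ^ b"
  define m where "m = ns div 2"
  define n' where "n' = q * (ns mod 2) + n0"
  define j1 where "j1 = (\<rho>1 + m) mod 2"
  define j where "j = q * j1 + r0"
  have "q * ns = q * (2 * m + ns mod 2)"
    by (simp add: m_def)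
  also have "\<dots> = 2 ^ Suc b * m + q * (ns mod 2)"
    by (simp add: q_def algebra_simps)
  finally have "n = 2 ^ Suc b * m + n'"
    by (simp add: assms(1) n'_def q_def)
  moreover have "n' < q * 2" and "j < q * 2" and "\<rho> < q * 4"
    unfolding n'_def j_def j1_def assms(2) using assms(4-6)
    by (simp_all add: mult_add_less_mult q_def)
  moreover have "(j + 2 ^ b * m) mod 2 ^ Suc b = \<rho> mod 2 ^ Suc b"
  proof -
    have "(j1 + m) mod 2 = \<rho>1 mod 2"
      unfolding j1_def by presburger
    then show ?thesis
      using mod_double_mult_add[OF assms(5), of "j1 + m"] mod_double_mult_add[OF assms(5), of \<rho>1]
      by (simp add: j_def q_def assms(2) algebra_simps)
  qed
  ultimately have "[2 * int (binomial_residue_sum n (4 * 2 ^ b) \<rho>) = 2 ^ m * int (n' choose j)]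
      (mod 2 ^ Suc m)"
    using binomial_residue_sum_cong[of m n b n' \<rho> j] assms(3) by (simp add: m_def q_def mult.commute)
  then have "(\<exists>z. odd z \<and> 2 * int (binomial_residue_sum n (4 * 2 ^ b) \<rho>) = z * 2 ^ m)
      \<longleftrightarrow> odd (n' choose j)"
    by (simp add: odd_cofactor_iff_cong)
  also have "\<dots> \<longleftrightarrow> odd ((ns mod 2) choose j1) \<and> odd (n0 choose r0)"
    unfolding n'_def j_def q_def using assms(4,5) by (rule odd_choose_pow2_digits)
  also have "odd ((ns mod 2) choose j1) \<longleftrightarrow> j1 \<le> ns mod 2"
    by (rule odd_choose_le_one) (simp_all add: j1_def)
  also have "j1 \<le> ns mod 2 \<longleftrightarrow> ns mod 4 \<noteq> (2 * \<rho>1 + 2) mod 4"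
    unfolding j1_def m_def by (rule parity_le_iff_mod_4_ne)
  finally show ?thesis
    by (simp add: m_def conj_commute)
qed

lemma binomial_residue_sum_eq_choose:
  assumes "n < M"
  shows "binomial_residue_sum n M \<rho> = n choose \<rho>"
proof -
  have "{k\<in>{0..n}. k mod M = \<rho>} = (if \<rho> \<le> n then {\<rho>} else {})"
    using assms by auto
  then show ?thesis
    by (simp add: binomial_residue_sum_def binomial_eq_0)
qed

lemma odd_part_binomial_residue_sum_2_3:
  fixes b ns n0 \<rho>1 r0 :: nat
  assumes "n = 2 ^ b * ns + n0" and "\<rho> = 2 ^ b * \<rho>1 + r0"
    and "ns div 2 = 1" and "n0 < 2 ^ b" and "r0 < 2 ^ b" and "\<rho>1 < 4"
  shows "(\<exists>z. odd z \<and> 2 * int (binomial_residue_sum n (4 * 2 ^ b) \<rho>) = z * 2 ^ (ns div 2))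
    \<longleftrightarrow> odd (n0 choose r0) \<and> (ns = 3 \<or> even \<rho>1)"
proof -
  have "n < 4 * 2 ^ b"
    using mult_add_less_mult[of ns 4 n0 "2 ^ b"] assms(1,3,4) by (simp add: mult.commute)
  then have "binomial_residue_sum n (4 * 2 ^ b) \<rho> = n choose \<rho>"
    by (rule binomial_residue_sum_eq_choose)
  then have "(\<exists>z. odd z \<and> 2 * int (binomial_residue_sum n (4 * 2 ^ b) \<rho>) = z * 2 ^ (ns div 2))
      \<longleftrightarrow> odd (n choose \<rho>)"
    unfolding assms(3) by auto
  also have "\<dots> \<longleftrightarrow> odd (ns choose \<rho>1) \<and> odd (n0 choose r0)"
    unfolding assms(1,2) using assms(4,5) by (rule odd_choose_pow2_digits)
  also have "odd (ns choose \<rho>1) \<longleftrightarrow> ns = 3 \<or> even \<rho>1"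
  proof -
    have "ns \<in> {2, 3}" and "\<rho>1 \<in> {0, 1, 2, 3}"
      using assms(3,6) by auto
    then show ?thesis
      by (auto simp: choose_two binomial_eq_0)
  qed
  finally show ?thesis
    by (simp add: conj_commute)
qed

lemma not_cong_double_plus_two_mod_4_iff:
  fixes x :: nat and y :: int
  shows "\<not> [int x = 2 * y + 2] (mod 4) \<longleftrightarrow> x mod 4 \<noteq> (2 * nat (y mod 4) + 2) mod 4"
proof -
  have "(2 * (y mod 4) + 2) mod 4 = (2 * y + 2) mod 4"
    by presburger
  then have "int (x mod 4) = int x mod 4" and "int ((2 * nat (y mod 4) + 2) mod 4) = (2 * y + 2) mod 4"
    by (simp_all add: of_nat_mod add.commute)
  then show ?thesis
    unfolding cong_def by (metis of_nat_eq_iff)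
qed

lemma odd_part_binomial_residue_sum:
  fixes b ns n0 r0 :: nat and rs :: int
  assumes "n = 2 ^ b * ns + n0" and "\<rho> = 2 ^ b * nat (rs mod 4) + r0"
    and "n0 < 2 ^ b" and "r0 < 2 ^ b"
  shows "(\<exists>z. odd z \<and> 2 * int (binomial_residue_sum n (4 * 2 ^ b) \<rho>) = z * 2 ^ (ns div 2))
    \<longleftrightarrow> odd (n0 choose r0) \<and>
      (ns > 2 \<and> \<not> [int ns = 2 * rs + 2] (mod 4) \<or> ns = 2 \<and> 2 dvd rs)"
proof -
  define \<rho>1 where "\<rho>1 = nat (rs mod 4)"
  have "\<rho>1 < 4"
    by (simp add: \<rho>1_def nat_less_iff)
  have even_iff: "2 dvd rs \<longleftrightarrow> even \<rho>1"
    unfolding \<rho>1_def by (simp add: even_nat_iff) presburger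
  have cong_iff: "\<not> [int ns = 2 * rs + 2] (mod 4) \<longleftrightarrow> ns mod 4 \<noteq> (2 * \<rho>1 + 2) mod 4"
    unfolding \<rho>1_def by (rule not_cong_double_plus_two_mod_4_iff)
  consider "ns < 2" | "ns div 2 = 1" | "ns \<ge> 4"
    by linarith
  then show ?thesis
  proof cases
    case 1
    then show ?thesis
      by auto
  next
    case 2
    have "(2 * \<rho>1 + 2) mod 4 \<noteq> 3"
      by presburger
    then show ?thesis
      using odd_part_binomial_residue_sum_2_3[OF assms(1,2)[folded \<rho>1_def] 2 assms(3,4) \<open>\<rho>1 < 4\<close>] 2
      by (auto simp: cong_iff even_iff)
  next
    case 3
    then show ?thesis
      using odd_part_binomial_residue_sum_ge_4[OF assms(1,2)[folded \<rho>1_def] 3 assms(3,4) \<open>\<rho>1 < 4\<close>]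
      by (simp add: cong_iff)
  qed
qed

lemma odd_times_powi_iff:
  fixes S m :: nat
  shows "(\<exists>z::int. odd z \<and> of_int z = (2::real) powi (- (int m - 1)) * real S)
    \<longleftrightarrow> (\<exists>z. odd z \<and> 2 * int S = z * 2 ^ m)"
proof -
  have "(2::real) powi (- (int m - 1)) = 2 / 2 ^ m"
    by (simp add: power_int_diff power_int_minus divide_inverse)
  moreover have "of_int z = 2 / 2 ^ m * real S \<longleftrightarrow> real_of_int (z * 2 ^ m) = real_of_int (2 * int S)" for z
    by (simp add: field_simps)
  ultimately have "of_int z = (2::real) powi (- (int m - 1)) * real S \<longleftrightarrow> 2 * int S = z * 2 ^ m" for z
    by (simp only: of_int_eq_iff eq_commute)
  then show ?thesis
    by simp
qed

lemma floor_div_totient_two_power: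
  assumes "\<alpha> > 0"
  shows "\<lfloor>(real n - 2 ^ (\<alpha> - 1)) / real (totient (2 ^ \<alpha>))\<rfloor> = int (n div 2 ^ (\<alpha> - 1)) - 1"
proof -
  have "totient (2 ^ \<alpha>) = 2 ^ (\<alpha> - 1)"
    using totient_prime_power[of 2 \<alpha>] assms by simp
  then have "(real n - 2 ^ (\<alpha> - 1)) / real (totient (2 ^ \<alpha>)) = real n / real (2 ^ (\<alpha> - 1)) - of_int 1"
    by (simp add: diff_divide_distrib)
  then show ?thesis
    by (simp only: floor_diff_of_int floor_divide_of_nat_eq)
qed

lemma cong_four_times_iff_digits:
  fixes k q :: nat and r :: int
  assumes "q > 0"
  shows "[int k = r] (mod int (4 * q)) \<longleftrightarrow> k mod (4 * q) = q * nat (r div int q mod 4) + nat (r mod int q)"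
proof -
  define M where "M = 4 * q"
  have "M > 0"
    using assms by (simp add: M_def)
  have "r mod (int q * 4) = int q * (r div int q mod 4) + r mod int q"
    by (rule zmod_zmult2_eq) simp
  then have digits: "nat (r mod int M) = q * nat (r div int q mod 4) + nat (r mod int q)"
    using assms by (simp add: M_def mult.commute nat_add_distrib nat_mult_distrib)
  have "[int k = r] (mod int M) \<longleftrightarrow> k mod M = nat (r mod int M)"
    using \<open>M > 0\<close> by (auto simp: cong_def simp flip: of_nat_mod)
  with digits show ?thesis
    by (simp only: M_def)
qed

theorem corollary1p2:
  fixes \<alpha> n :: nat and r :: int
  assumes "\<alpha> \<ge> 2"
  shows "(\<exists>m::int. odd m \<and>
            of_int m = (2::real) powi (- \<lfloor>(real n - 2 ^ (\<alpha> - 1)) / real (totient (2 ^ \<alpha>))\<rfloor>)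
                        * real (\<Sum>k\<in>{k\<in>{0..n}. [int k = r] (mod 2 ^ \<alpha>)}. n choose k))
     \<longleftrightarrow>
     (odd ((n mod 2 ^ (\<alpha> - 2)) choose nat (r mod 2 ^ (\<alpha> - 2))) \<and>
      ((n div 2 ^ (\<alpha> - 2) > 2 \<and>
          \<not> [int (n div 2 ^ (\<alpha> - 2)) = 2 * (r div 2 ^ (\<alpha> - 2)) + 2] (mod 4)) \<or>
       (n div 2 ^ (\<alpha> - 2) = 2 \<and> 2 dvd (r div 2 ^ (\<alpha> - 2)))))"
proof -
  define b where "b = \<alpha> - 2"
  define q :: nat where "q = 2 ^ b"
  define \<rho> where "\<rho> = q * nat (r div int q mod 4) + nat (r mod int q)"
  have \<alpha>: "\<alpha> = Suc (Suc b)"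
    using assms by (simp add: b_def)
  have floor: "\<lfloor>(real n - 2 ^ (\<alpha> - 1)) / real (totient (2 ^ \<alpha>))\<rfloor> = int (n div q div 2) - 1"
    using floor_div_totient_two_power[of \<alpha> n] div_mult2_eq[of n q 2] by (simp add: \<alpha> q_def mult.commute)
  have sum: "(\<Sum>k\<in>{k\<in>{0..n}. [int k = r] (mod 2 ^ \<alpha>)}. n choose k) =
      binomial_residue_sum n (4 * 2 ^ b) \<rho>"
    using cong_four_times_iff_digits[of q _ r] by (simp add: binomial_residue_sum_def \<alpha> q_def \<rho>_def)
  show ?thesis
    unfolding floor sum odd_times_powi_iff
    using odd_part_binomial_residue_sum[of n b "n div q" "n mod q" \<rho> "r div int q" "nat (r mod int q)"]
    by (simp add: \<alpha> q_def \<rho>_def nat_less_iff)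
qed

end
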